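(* Let $G$ be a connected graph with node set $V(G)$, let $N_v$ denote the set of neighbors of $v$, and let $A_1\neq\emptyset$ be the set of initially awake nodes. Define $A_0=\emptyset$ and, for $i\ge 1$, $S_i=\left(\bigcup_{v\in A_i}N_v\right)\cap\left(V(G)\setminus(A_i\cup A_{i-1})\right)$ and $A_{i+1}=S_i$. For $i\ge1$, let $v_1^{(i)},\dots,v_{|A_i|}^{(i)}$ be the elements of $A_i$ in increasing order of ID and define $S_{v_j^{(i)}}^{(i)}=N_{v_j^{(i)}}\cap\left(S_i\setminus\bigcup_{k\in[j-1]}S_{v_k^{(i)}}^{(i)}\right)$. Then for every node $v$: (1) $v$ is an actor of at most one epoch, that is, there is a unique $i$ with $v\in A_i$; and (2) $S_v^{(i)}\cap S_w^{(j)}=\emptyset$ for every node $w\neq v$, where $i$ and $j$ are the unique indices with $v\in A_i$ and $w\in A_j$.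
   Context: Nodes have unique IDs from $[n]$. The nodes of $A_i$ are called the actors of epoch $i$. *)

theory Defs
  imports Main
begin

text \<open>Nodes are identified with their IDs (natural numbers). The graph is given by a
finite node set V and a symmetric irreflexive edge relation E on V.\<close>

definition nbrs :: "nat set \<Rightarrow> (nat \<Rightarrow> nat \<Rightarrow> bool) \<Rightarrow> nat \<Rightarrow> nat set" where
  "nbrs V E v = {u \<in> V. E v u}"

fun epoch :: "nat set \<Rightarrow> (nat \<Rightarrow> nat \<Rightarrow> bool) \<Rightarrow> nat set \<Rightarrow> nat \<Rightarrow> nat set" where
  "epoch V E A1 0 = {}"
| "epoch V E A1 (Suc 0) = A1"
| "epoch V E A1 (Suc (Suc i)) =
     (\<Union>v\<in>epoch V E A1 (Suc i). nbrs V E v) \<inter> (V - (epoch V E A1 (Suc i) \<union> epoch V E A1 i))"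

definition Sset :: "nat set \<Rightarrow> (nat \<Rightarrow> nat \<Rightarrow> bool) \<Rightarrow> nat set \<Rightarrow> nat \<Rightarrow> nat set" where
  "Sset V E A1 i =
     (\<Union>v\<in>epoch V E A1 i. nbrs V E v) \<inter> (V - (epoch V E A1 i \<union> epoch V E A1 (i - 1)))"

text \<open>assign N S acc [v_j, ..., v_m]: processes the actors in the given order, where acc is
the union of the sets already assigned to earlier actors; v_j gets N v_j \<inter> (S - acc).\<close>
primrec assign :: "(nat \<Rightarrow> nat set) \<Rightarrow> nat set \<Rightarrow> nat set \<Rightarrow> nat list \<Rightarrow> nat \<Rightarrow> nat set" where
  "assign N S acc [] = (\<lambda>_. {})"
| "assign N S acc (v # vs) =
     (let s = N v \<inter> (S - acc) in (assign N S (acc \<union> s) vs)(v := s))"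

definition Sv :: "nat set \<Rightarrow> (nat \<Rightarrow> nat \<Rightarrow> bool) \<Rightarrow> nat set \<Rightarrow> nat \<Rightarrow> nat \<Rightarrow> nat set" where
  "Sv V E A1 i v = assign (nbrs V E) (Sset V E A1 i) {} (sorted_list_of_set (epoch V E A1 i)) v"

end

theory Submission
  imports Defs
begin

text \<open>The epochs are the breadth-first layers around \<open>A\<^sub>1\<close>: \<open>A\<^sub>i\<close> consists of the nodes at
distance exactly \<open>i - 1\<close> from \<open>A\<^sub>1\<close>. Because edges are symmetric, a neighbour of layer \<open>i\<close> lies in
layer \<open>i - 1\<close>, \<open>i\<close> or \<open>i + 1\<close>, so removing \<open>A\<^sub>i \<union> A\<^sub>i\<^sub>-\<^sub>1\<close> from the neighbourhood of \<open>A\<^sub>i\<close> leaves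
exactly the next layer. Layers are disjoint, and by connectivity they cover \<open>V\<close>. Finally
\<open>S\<^sub>v\<^sup>(\<^sup>i\<^sup>) \<subseteq> S\<^sub>i = A\<^sub>i\<^sub>+\<^sub>1\<close>: sets of actors of different epochs lie in different layers, and within one
epoch each actor only receives what the earlier actors have left over.\<close>

text \<open>\<open>reached V E A1 k\<close> is the set of nodes within distance \<open>k - 1\<close> (not \<open>k\<close>) of \<open>A1\<close>,
matching the indexing of \<open>epoch\<close>.\<close>

primrec reached :: "nat set \<Rightarrow> (nat \<Rightarrow> nat \<Rightarrow> bool) \<Rightarrow> nat set \<Rightarrow> nat \<Rightarrow> nat set" where
  "reached V E A1 0 = {}"
| "reached V E A1 (Suc k) = A1 \<union> (\<Union>v\<in>reached V E A1 k. nbrs V E v)"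

lemma reached_Suc_mono: "reached V E A1 k \<subseteq> reached V E A1 (Suc k)"
  by (induction k) auto

lemma reached_mono: "i \<le> j \<Longrightarrow> reached V E A1 i \<subseteq> reached V E A1 j"
  using lift_Suc_mono_le[of "reached V E A1"] reached_Suc_mono by blast

lemma nbrs_subset_reached_Suc: "v \<in> reached V E A1 k \<Longrightarrow> nbrs V E v \<subseteq> reached V E A1 (Suc k)"
  by auto

lemma nbrs_sym:
  assumes "\<And>u w. E u w \<Longrightarrow> u \<in> V \<and> w \<in> V" and "\<And>u w. E u w \<Longrightarrow> E w u"
  shows "w \<in> nbrs V E u \<longleftrightarrow> u \<in> nbrs V E w"
  using assms unfolding nbrs_def by blast

lemma epoch_eq_reached_diff:
  assumes sym: "\<And>u w. w \<in> nbrs V E u \<Longrightarrow> u \<in> nbrs V E w"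
  shows "epoch V E A1 k = reached V E A1 k - reached V E A1 (k - 1)"
proof (induction k rule: induct_nat_012)
  case (ge2 i)
  let ?R = "reached V E A1"
  have IH: "epoch V E A1 (Suc i) = ?R (Suc i) - ?R i" "epoch V E A1 i = ?R i - ?R (i - 1)"
    using ge2 by simp_all
  have mono: "?R (i - 1) \<subseteq> ?R i" "?R i \<subseteq> ?R (Suc i)"
    by (simp_all add: reached_mono reached_Suc_mono del: reached.simps)
  have nbrs_prev: "nbrs V E v \<subseteq> ?R i" if "v \<in> ?R (i - 1)" for v
    using that by (cases i) auto
  have "(\<Union>v\<in>?R (Suc i) - ?R i. nbrs V E v) \<inter> (V - (?R (Suc i) - ?R i \<union> (?R i - ?R (i - 1))))
      = ?R (Suc (Suc i)) - ?R (Suc i)" (is "?new = ?layer")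
  proof
    show "?new \<subseteq> ?layer"
    proof
      fix x
      assume "x \<in> ?new"
      then obtain y where y: "y \<in> ?R (Suc i)" "y \<notin> ?R i" "x \<in> nbrs V E y"
        and x: "x \<notin> ?R (Suc i) - ?R i" "x \<notin> ?R i - ?R (i - 1)"
        by blast
      have "x \<notin> ?R (Suc i)"
      proof
        assume "x \<in> ?R (Suc i)"
        with x have "x \<in> ?R (i - 1)"
          by blast
        moreover have "y \<in> nbrs V E x"
          using y(3) by (rule sym)
        ultimately show False
          using nbrs_prev y(2) by blast
      qed
      with y show "x \<in> ?layer"
        by auto
    qed
  next
    show "?layer \<subseteq> ?new"
      using mono nbrs_subset_reached_Suc[of _ V E A1 i] by (auto simp: nbrs_def)
  qed
  then show ?case
    unfolding epoch.simps IH by simp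
qed simp_all

lemma epoch_unique:
  assumes sym: "\<And>u w. w \<in> nbrs V E u \<Longrightarrow> u \<in> nbrs V E w"
    and "v \<in> epoch V E A1 i" and "v \<in> epoch V E A1 j"
  shows "i = j"
proof (rule ccontr)
  assume "i \<noteq> j"
  then have "min i j \<le> max i j - 1"
    by linarith
  then have "reached V E A1 (min i j) \<subseteq> reached V E A1 (max i j - 1)"
    by (rule reached_mono)
  then show False
    using assms epoch_eq_reached_diff[OF sym]
    by (cases "i \<le> j") (auto simp: min_def max_def)
qed

lemma epoch_disjoint:
  assumes "\<And>u w. w \<in> nbrs V E u \<Longrightarrow> u \<in> nbrs V E w" and "i \<noteq> j"
  shows "epoch V E A1 i \<inter> epoch V E A1 j = {}"
  using epoch_unique assms by blast

lemma reached_subset_UN_epoch: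
  assumes sym: "\<And>u w. w \<in> nbrs V E u \<Longrightarrow> u \<in> nbrs V E w"
  shows "reached V E A1 k \<subseteq> (\<Union>i. epoch V E A1 i)"
proof (induction k)
  case (Suc k)
  have "epoch V E A1 (Suc k) = reached V E A1 (Suc k) - reached V E A1 k"
    using epoch_eq_reached_diff[OF sym, of A1 "Suc k"] by simp
  with Suc.IH show ?case
    by blast
qed simp

lemma rtranclp_in_reached:
  assumes "E\<^sup>*\<^sup>* a v" and "a \<in> A1" and "\<And>u w. E u w \<Longrightarrow> u \<in> V \<and> w \<in> V"
  shows "\<exists>k. v \<in> reached V E A1 k"
  using assms(1)
proof induction
  case base
  show ?case
    using assms(2) by (intro exI[of _ 1]) simp
next
  case (step u w)
  then obtain k where "u \<in> reached V E A1 k"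
    by blast
  moreover have "w \<in> nbrs V E u"
    using step assms(3) unfolding nbrs_def by blast
  ultimately show ?case
    using nbrs_subset_reached_Suc by blast
qed

lemma assign_subset: "assign N S acc vs v \<subseteq> S - acc"
  by (induction vs arbitrary: acc) (auto simp: Let_def)

lemma assign_disjoint: "v \<noteq> w \<Longrightarrow> assign N S acc vs v \<inter> assign N S acc vs w = {}"
proof (induction vs arbitrary: acc)
  case (Cons x vs)
  let ?s = "N x \<inter> (S - acc)"
  have "assign N S (acc \<union> ?s) vs u \<inter> ?s = {}" for u
    using assign_subset by blast
  then show ?case
    using Cons.IH[OF Cons.prems, of "acc \<union> ?s"] Cons.prems by (auto simp: Let_def)
qed simp

lemma Sv_subset_epoch_Suc: "Sv V E A1 i v \<subseteq> epoch V E A1 (Suc i)"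
proof (cases i)
  case (Suc k)
  then have "Sset V E A1 i = epoch V E A1 (Suc i)"
    by (simp add: Sset_def)
  then show ?thesis
    using assign_subset unfolding Sv_def by blast
qed (simp add: Sv_def)

lemma Sv_disjoint:
  assumes sym: "\<And>u w. w \<in> nbrs V E u \<Longrightarrow> u \<in> nbrs V E w" and "v \<noteq> w"
  shows "Sv V E A1 i v \<inter> Sv V E A1 j w = {}"
proof (cases "i = j")
  case True
  show ?thesis
    using \<open>v \<noteq> w\<close> unfolding Sv_def True by (rule assign_disjoint)
next
  case False
  then show ?thesis
    using Sv_subset_epoch_Suc[of V E A1 i v] Sv_subset_epoch_Suc[of V E A1 j w]
      epoch_disjoint[OF sym, of "Suc i" "Suc j"] by blast
qed

theorem lemma3:
  fixes V :: "nat set" and E :: "nat \<Rightarrow> nat \<Rightarrow> bool" and A1 :: "nat set"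
  assumes "finite V"
    and EV: "\<And>u w. E u w \<Longrightarrow> u \<in> V \<and> w \<in> V"
    and "\<And>u w. E u w \<Longrightarrow> E w u"
    and "\<And>u. \<not> E u u"
    and conn: "\<And>u w. u \<in> V \<Longrightarrow> w \<in> V \<Longrightarrow> E\<^sup>*\<^sup>* u w"
    and "A1 \<noteq> {}" and "A1 \<subseteq> V"
  shows "\<forall>v\<in>V. (\<exists>!i. v \<in> epoch V E A1 i) \<and>
           (\<forall>w\<in>V. w \<noteq> v \<longrightarrow>
              Sv V E A1 (THE i. v \<in> epoch V E A1 i) v \<inter> Sv V E A1 (THE j. w \<in> epoch V E A1 j) w = {})"
proof -
  have sym: "\<And>u w. w \<in> nbrs V E u \<Longrightarrow> u \<in> nbrs V E w"
    using nbrs_sym[OF EV] assms(3) by blast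
  obtain a where a: "a \<in> A1"
    using assms(6) by blast
  have unique_epoch: "\<exists>!i. v \<in> epoch V E A1 i" if v: "v \<in> V" for v
  proof -
    obtain k where "v \<in> reached V E A1 k"
      using rtranclp_in_reached[OF conn[OF _ v] a EV] a assms(7) by blast
    then obtain i where "v \<in> epoch V E A1 i"
      using reached_subset_UN_epoch[OF sym] by blast
    then show ?thesis
      using epoch_unique[OF sym] by blast
  qed
  then show ?thesis
    using Sv_disjoint[OF sym] by auto
qed

end
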